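(* Consider the reaction network $\mathcal{G}_1$ with species $X_1,X_2,X_3,X_4$ and reactions $X_1+X_2\to\emptyset$, $X_2+X_3\to\emptyset$, $X_3+X_4\to\emptyset$, $X_4\to X_1$, $X_1\to\emptyset$, $\emptyset\rightleftharpoons X_2$, $\emptyset\rightleftharpoons X_3$, $\emptyset\rightleftharpoons X_4$, with arbitrary positive rate constants, together with the input reaction $\emptyset\to X_1$ of rate $\zeta$. Then for every choice of positive rate constants and every $\mathbf{x}\in\mathbb{R}^4_{>0}$, the $3\times3$ matrix $B(\mathbf{x})$ obtained from the Jacobian of the mass-action vector field by deleting its first row and last column has $\det B(\mathbf{x})\neq0$. In particular, $\mathcal{G}_1$ cannot exhibit infinitesimal homeostasis (input $X_1$, output $X_4$) for any choice of rate constants and any $\zeta$.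
   Context: Mass-action dynamics: $\dot{\mathbf{x}}=\mathbf{f}(\mathbf{x},\mathbf{k})+\zeta\mathbf{e}_1$, where $\mathbf{f}(\mathbf{x},\mathbf{k})=\sum_{\mathbf{y}\to\mathbf{y}'}k_{\mathbf{y}\to\mathbf{y}'}\mathbf{x}^{\mathbf{y}}(\mathbf{y}'-\mathbf{y})$ sums over all listed reactions other than $\emptyset\to X_1$ (here $\emptyset$ is the zero vector and $X_i$ is $\mathbf{e}_i$). Infinitesimal homeostasis at a linearly stable positive equilibrium (all Jacobian eigenvalues with negative real part) means $\det B=0$ there, with $B$ the Jacobian with first row and last column deleted. *)

theory Defs
  imports "HOL-Analysis.Analysis" "HOL-Library.Numeral_Type"
begin

text \<open>Species X1,...,X4 are indexed by the type 4; species number i (1..4)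
  is the element of_nat (i - 1).\<close>
definition sp :: "nat \<Rightarrow> 4" where
  "sp i = of_nat (i - 1)"

text \<open>Complexes are stoichiometric vectors in nat^4; X_i is the unit vector e_i.\<close>
definition X :: "nat \<Rightarrow> nat ^ 4" where
  "X i = axis (sp i) 1"

definition monom_ma :: "real ^ 4 \<Rightarrow> nat ^ 4 \<Rightarrow> real" where
  "monom_ma x y = (\<Prod>i\<in>UNIV. x $ i ^ (y $ i))"

text \<open>Mass-action vector field of a list of reactions (y, y', k) meaning y -> y' with rate k.\<close>
definition ma_field :: "((nat ^ 4) \<times> (nat ^ 4) \<times> real) list \<Rightarrow> real ^ 4 \<Rightarrow> real ^ 4" where
  "ma_field R x = (\<Sum>(y, y', k) \<leftarrow> R.
      (k * monom_ma x y) *\<^sub>R (\<chi> i. real (y' $ i) - real (y $ i)))"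

definition G1_reactions ::
  "real \<Rightarrow> real \<Rightarrow> real \<Rightarrow> real \<Rightarrow> real \<Rightarrow> real \<Rightarrow> real \<Rightarrow> real \<Rightarrow> real \<Rightarrow> real \<Rightarrow> real
   \<Rightarrow> ((nat ^ 4) \<times> (nat ^ 4) \<times> real) list" where
  "G1_reactions k1 k2 k3 k4 k5 k6 k7 k8 k9 k10 k11 =
     [ (X 1 + X 2, 0, k1),
       (X 2 + X 3, 0, k2),
       (X 3 + X 4, 0, k3),
       (X 4, X 1, k4),
       (X 1, 0, k5),
       (0, X 2, k6), (X 2, 0, k7),
       (0, X 3, k8), (X 3, 0, k9),
       (0, X 4, k10), (X 4, 0, k11) ]"

definition G1_field ::
  "real \<Rightarrow> real \<Rightarrow> real \<Rightarrow> real \<Rightarrow> real \<Rightarrow> real \<Rightarrow> real \<Rightarrow> real \<Rightarrow> real \<Rightarrow> real \<Rightarrow> real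
   \<Rightarrow> real \<Rightarrow> real ^ 4 \<Rightarrow> real ^ 4" where
  "G1_field k1 k2 k3 k4 k5 k6 k7 k8 k9 k10 k11 \<zeta> x =
     ma_field (G1_reactions k1 k2 k3 k4 k5 k6 k7 k8 k9 k10 k11) x + \<zeta> *\<^sub>R axis (sp 1) 1"

definition jacobian4 :: "(real ^ 4 \<Rightarrow> real ^ 4) \<Rightarrow> real ^ 4 \<Rightarrow> real ^ 4 ^ 4" where
  "jacobian4 F x = (\<chi> i j. deriv (\<lambda>t. F (x + (t - x $ j) *\<^sub>R axis j 1) $ i) (x $ j))"

definition del_row1 :: "3 \<Rightarrow> 4" where
  "del_row1 r = (if r = 0 then sp 2 else if r = 1 then sp 3 else sp 4)"

definition del_col4 :: "3 \<Rightarrow> 4" where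
  "del_col4 c = (if c = 0 then sp 1 else if c = 1 then sp 2 else sp 3)"

definition Bmat :: "real ^ 4 ^ 4 \<Rightarrow> real ^ 3 ^ 3" where
  "Bmat J = (\<chi> r c. J $ del_row1 r $ del_col4 c)"

definition linearly_stable :: "real ^ 4 ^ 4 \<Rightarrow> bool" where
  "linearly_stable J \<longleftrightarrow>
     (\<forall>ev::complex. det (mat ev - (\<chi> i j. complex_of_real (J $ i $ j))) = 0 \<longrightarrow> Re ev < 0)"

definition positive4 :: "real ^ 4 \<Rightarrow> bool" where
  "positive4 x \<longleftrightarrow> (\<forall>i. x $ i > 0)"

definition inf_homeostasis :: "(real ^ 4 \<Rightarrow> real ^ 4) \<Rightarrow> bool" where
  "inf_homeostasis F \<longleftrightarrow>
     (\<exists>x. positive4 x \<and> F x = 0 \<and> linearly_stable (jacobian4 F x)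
          \<and> det (Bmat (jacobian4 F x)) = 0)"

end

theory Submission
  imports Defs
begin

text \<open>Species \<open>X\<^sub>1\<close> enters the equations of \<open>X\<^sub>2, X\<^sub>3, X\<^sub>4\<close> only through \<open>X\<^sub>1 + X\<^sub>2 \<rightarrow> \<emptyset>\<close>, and
  \<open>X\<^sub>2\<close> enters the equation of \<open>X\<^sub>4\<close> not at all. Hence \<open>B\<close> is upper triangular and
  \<open>det B = (-k\<^sub>1 x\<^sub>2)(-k\<^sub>2 x\<^sub>3)(-k\<^sub>3 x\<^sub>4) < 0\<close> on the positive orthant
  (with \<open>x\<^sub>i\<close> stored as \<open>x $ (i - 1)\<close>); in particular no
  positive equilibrium can satisfy \<open>det B = 0\<close>.\<close>

lemma sp_numeral_simps: "sp (Suc 0) = 0" "sp 1 = 0" "sp 2 = 1" "sp 3 = 2" "sp 4 = 3"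
  by (simp_all add: sp_def)

lemma X_component:
  "X (Suc 0) $ i = (if i = 0 then 1 else 0)"
  "X 1 $ i = (if i = 0 then 1 else 0)" "X 2 $ i = (if i = 1 then 1 else 0)"
  "X 3 $ i = (if i = 2 then 1 else 0)" "X 4 $ i = (if i = 3 then 1 else 0)"
  by (simp_all add: X_def sp_def axis_def)

lemma prod_UNIV_4: "(\<Prod>i\<in>(UNIV::4 set). f i) = f 0 * f 1 * f 2 * f 3"
proof -
  have UNIV_eq: "(UNIV::4 set) = {0, 1, 2, 3}"
    using UNIV_4 by auto
  show ?thesis
    unfolding UNIV_eq by (simp add: mult.assoc)
qed

lemma ma_field_component:
  "ma_field R x $ i = (\<Sum>(y, y', k) \<leftarrow> R. k * monom_ma x y * (real (y' $ i) - real (y $ i)))"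
  unfolding ma_field_def by (induction R) auto

lemma jacobian4_eqI:
  assumes "((\<lambda>t. F (x + (t - x $ j) *\<^sub>R axis j 1) $ i) has_real_derivative D) (at (x $ j))"
  shows "jacobian4 F x $ i $ j = D"
  using assms unfolding jacobian4_def by (simp add: DERIV_imp_deriv)

lemma G1_field_component:
  "G1_field k1 k2 k3 k4 k5 k6 k7 k8 k9 k10 k11 \<zeta> y $ 1
     = - k1 * y$0 * y$1 - k2 * y$1 * y$2 + k6 - k7 * y$1"
  "G1_field k1 k2 k3 k4 k5 k6 k7 k8 k9 k10 k11 \<zeta> y $ 2
     = - k2 * y$1 * y$2 - k3 * y$2 * y$3 + k8 - k9 * y$2"
  "G1_field k1 k2 k3 k4 k5 k6 k7 k8 k9 k10 k11 \<zeta> y $ 3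
     = - k3 * y$2 * y$3 - k4 * y$3 + k10 - k11 * y$3"
  unfolding G1_field_def vector_add_component ma_field_component G1_reactions_def
  by (simp_all add: monom_ma_def prod_UNIV_4 X_component sp_numeral_simps axis_def
      algebra_simps)

lemma G1_jacobian_entries:
  fixes k1 k2 k3 k4 k5 k6 k7 k8 k9 k10 k11 \<zeta> :: real and x :: "real ^ 4"
  defines "J \<equiv> jacobian4 (G1_field k1 k2 k3 k4 k5 k6 k7 k8 k9 k10 k11 \<zeta>) x"
  shows "J $ 1 $ 0 = - k1 * x$1"
    and "J $ 2 $ 0 = 0" and "J $ 2 $ 1 = - k2 * x$2"
    and "J $ 3 $ 0 = 0" and "J $ 3 $ 1 = 0" and "J $ 3 $ 2 = - k3 * x$3"
  unfolding J_def
  by (rule jacobian4_eqI, auto simp: G1_field_component axis_def intro!: derivative_eq_intros)+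

lemma det_upper_triangular_3:
  fixes A :: "'a::comm_ring_1 ^ 3 ^ 3"
  assumes "A $ 1 $ 0 = 0" "A $ 2 $ 0 = 0" "A $ 2 $ 1 = 0"
  shows "det A = A $ 0 $ 0 * A $ 1 $ 1 * A $ 2 $ 2"
proof -
  have three_eq_zero: "(3::3) = 0"
    by simp
  show ?thesis
    using assms by (simp add: det_3 three_eq_zero)
qed

lemma G1_det_B:
  "det (Bmat (jacobian4 (G1_field k1 k2 k3 k4 k5 k6 k7 k8 k9 k10 k11 \<zeta>) x))
     = - k1 * k2 * k3 * x$1 * x$2 * x$3"
  by (subst det_upper_triangular_3)
     (simp_all add: Bmat_def del_row1_def del_col4_def sp_numeral_simps G1_jacobian_entries)

theorem mainTheorem4:
  fixes k1 k2 k3 k4 k5 k6 k7 k8 k9 k10 k11 \<zeta> :: real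
  assumes "k1 > 0" "k2 > 0" "k3 > 0" "k4 > 0" "k5 > 0" "k6 > 0"
      and "k7 > 0" "k8 > 0" "k9 > 0" "k10 > 0" "k11 > 0"
  shows "(\<forall>x. positive4 x \<longrightarrow>
            det (Bmat (jacobian4 (G1_field k1 k2 k3 k4 k5 k6 k7 k8 k9 k10 k11 \<zeta>) x)) \<noteq> 0)
       \<and> \<not> inf_homeostasis (G1_field k1 k2 k3 k4 k5 k6 k7 k8 k9 k10 k11 \<zeta>)"
proof -
  have "det (Bmat (jacobian4 (G1_field k1 k2 k3 k4 k5 k6 k7 k8 k9 k10 k11 \<zeta>) x)) \<noteq> 0"
    if "positive4 x" for x
  proof -
    have "x$1 > 0" "x$2 > 0" "x$3 > 0"
      using that by (auto simp: positive4_def)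
    then have "k1 * k2 * k3 * x$1 * x$2 * x$3 > 0"
      using assms by simp
    then show ?thesis
      unfolding G1_det_B by linarith
  qed
  then show ?thesis
    unfolding inf_homeostasis_def by blast
qed

end
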